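(* In an efficient enhanced Gelfand--Zetlin pattern, the set of edges is uniquely determined by the underlying Gelfand--Zetlin pattern and the set of encircled entries. That is, two efficient enhanced patterns with the same entries and the same encircled entries have the same edges.
   Context: Let $\lambda=(\lambda_1\ge\dots\ge\lambda_n)$ be a partition. A GZ pattern with top row $\lambda$ is an integer array $a_{ij}$, $0\le i\le n-1$, $1\le j\le n-i$, with $a_{0j}=\lambda_{n+1-j}$ and $a_{i-1,j}\le a_{ij}\le a_{i-1,j+1}$ ($a_{ij}$ sits below $a_{i-1,j}$ and $a_{i-1,j+1}$). An enhanced GZ pattern is such an array with a set of encircled entries and a set of edges, each joining an $a_{ij}$ ($i\ge1$) with $a_{i-1,j}$ or $a_{i-1,j+1}$, such that: (1) row $0$ entries are encircled; (2) entries joined by an edge are equal and the lower one is encircled; (3) for $i\ge1$, $1\le j\le n-i-1$: both $a_{ij},a_{i,j+1}$ are joined to $a_{i-1,j+1}$ iff both are joined to $a_{i+1,j}$; (4) if $a_{0j}=a_{0,j+1}$ then $a_{1j}$ is encircled and joined to both; (5) if $a_{i-1,j}<a_{i-1,j+1}$ and $a_{ij}=a_{i-1,j}$, then $a_{ij}$ is encircled and joined to $a_{i-1,j}$; (6) if $a_{i-1,j}<a_{i-1,j+1}$, $a_{ij}=a_{i-1,j+1}$ and $a_{ij}$ is encircled, then it is joined to $a_{i-1,j+1}$; (7) if $a_{i-1,j}=a_{i-1,j+1}=a_{ij}$ and $a_{i-1,j},a_{i-1,j+1}$ can be connected by a path of edges, then $a_{ij}$ is encircled and joined to both; (8) if $a_{i-1,j}=a_{i-1,j+1}=a_{ij}$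 and $a_{ij}$ is encircled, then it is joined to at least one of them. The pattern is inefficient if it contains $a_{i-1,j}=a_{i-1,j+1}=a_{ij}$ with no edge between $a_{ij}$ and $a_{i-1,j+1}$, and efficient otherwise. *)

theory Defs
  imports Main
begin

text \<open>Positions are pairs (i,j) with 0 <= i <= n-1, 1 <= j <= n-i.
  The partition lambda is given as a function on indices 1..n.
  An edge is recorded as the ordered pair (lower entry, upper entry),
  i.e. ((i,j),(i-1,j)) or ((i,j),(i-1,j+1)) with i >= 1.\<close>

definition is_partition :: "nat \<Rightarrow> (nat \<Rightarrow> int) \<Rightarrow> bool" where
  "is_partition n lam \<longleftrightarrow>
     (\<forall>k. 1 \<le> k \<and> k < n \<longrightarrow> lam k \<ge> lam (k+1)) \<and>
     (\<forall>k. 1 \<le> k \<and> k \<le> n \<longrightarrow> lam k \<ge> 0)"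

definition in_pattern :: "nat \<Rightarrow> nat \<times> nat \<Rightarrow> bool" where
  "in_pattern n p \<longleftrightarrow> fst p < n \<and> 1 \<le> snd p \<and> snd p \<le> n - fst p"

definition GZ_pattern :: "nat \<Rightarrow> (nat \<Rightarrow> int) \<Rightarrow> (nat \<Rightarrow> nat \<Rightarrow> int) \<Rightarrow> bool" where
  "GZ_pattern n lam a \<longleftrightarrow>
     (\<forall>j. 1 \<le> j \<and> j \<le> n \<longrightarrow> a 0 j = lam (n + 1 - j)) \<and>
     (\<forall>i j. 1 \<le> i \<and> i < n \<and> 1 \<le> j \<and> j \<le> n - i \<longrightarrow>
        a (i-1) j \<le> a i j \<and> a i j \<le> a (i-1) (j+1))"

definition valid_edge :: "nat \<Rightarrow> (nat \<times> nat) \<times> (nat \<times> nat) \<Rightarrow> bool" where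
  "valid_edge n e \<longleftrightarrow>
     (\<exists>i j. 1 \<le> i \<and> i < n \<and> 1 \<le> j \<and> j \<le> n - i \<and>
        (e = ((i,j),(i-1,j)) \<or> e = ((i,j),(i-1,j+1))))"

definition edge_connected ::
  "((nat \<times> nat) \<times> (nat \<times> nat)) set \<Rightarrow> nat \<times> nat \<Rightarrow> nat \<times> nat \<Rightarrow> bool" where
  "edge_connected E p q \<longleftrightarrow> (p, q) \<in> (E \<union> E\<inverse>)\<^sup>*"

definition enhanced_GZ ::
  "nat \<Rightarrow> (nat \<Rightarrow> int) \<Rightarrow> (nat \<Rightarrow> nat \<Rightarrow> int) \<Rightarrow> (nat \<times> nat) set
     \<Rightarrow> ((nat \<times> nat) \<times> (nat \<times> nat)) set \<Rightarrow> bool" where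
  "enhanced_GZ n lam a C E \<longleftrightarrow>
     GZ_pattern n lam a \<and>
     (\<forall>p\<in>C. in_pattern n p) \<and>
     (\<forall>e\<in>E. valid_edge n e) \<and>
     \<comment> \<open>(1)\<close>
     (\<forall>j. 1 \<le> j \<and> j \<le> n \<longrightarrow> (0, j) \<in> C) \<and>
     \<comment> \<open>(2)\<close>
     (\<forall>i j k l. ((i,j),(k,l)) \<in> E \<longrightarrow> a i j = a k l \<and> (i,j) \<in> C) \<and>
     \<comment> \<open>(3)\<close>
     (\<forall>i j. 1 \<le> i \<and> 1 \<le> j \<and> j + 1 \<le> n - i \<longrightarrow>
        ((((i,j),(i-1,j+1)) \<in> E \<and> ((i,j+1),(i-1,j+1)) \<in> E) \<longleftrightarrow>
         (((i+1,j),(i,j)) \<in> E \<and> ((i+1,j),(i,j+1)) \<in> E))) \<and>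
     \<comment> \<open>(4)\<close>
     (\<forall>j. 1 \<le> j \<and> j + 1 \<le> n \<and> a 0 j = a 0 (j+1) \<longrightarrow>
        (1,j) \<in> C \<and> ((1,j),(0,j)) \<in> E \<and> ((1,j),(0,j+1)) \<in> E) \<and>
     \<comment> \<open>(5)\<close>
     (\<forall>i j. 1 \<le> i \<and> i < n \<and> 1 \<le> j \<and> j \<le> n - i \<and>
        a (i-1) j < a (i-1) (j+1) \<and> a i j = a (i-1) j \<longrightarrow>
        (i,j) \<in> C \<and> ((i,j),(i-1,j)) \<in> E) \<and>
     \<comment> \<open>(6)\<close>
     (\<forall>i j. 1 \<le> i \<and> i < n \<and> 1 \<le> j \<and> j \<le> n - i \<and>
        a (i-1) j < a (i-1) (j+1) \<and> a i j = a (i-1) (j+1) \<and> (i,j) \<in> C \<longrightarrow>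
        ((i,j),(i-1,j+1)) \<in> E) \<and>
     \<comment> \<open>(7)\<close>
     (\<forall>i j. 1 \<le> i \<and> i < n \<and> 1 \<le> j \<and> j \<le> n - i \<and>
        a (i-1) j = a (i-1) (j+1) \<and> a i j = a (i-1) j \<and>
        edge_connected E (i-1,j) (i-1,j+1) \<longrightarrow>
        (i,j) \<in> C \<and> ((i,j),(i-1,j)) \<in> E \<and> ((i,j),(i-1,j+1)) \<in> E) \<and>
     \<comment> \<open>(8)\<close>
     (\<forall>i j. 1 \<le> i \<and> i < n \<and> 1 \<le> j \<and> j \<le> n - i \<and>
        a (i-1) j = a (i-1) (j+1) \<and> a i j = a (i-1) j \<and> (i,j) \<in> C \<longrightarrow>
        ((i,j),(i-1,j)) \<in> E \<or> ((i,j),(i-1,j+1)) \<in> E)"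

definition efficient ::
  "nat \<Rightarrow> (nat \<Rightarrow> nat \<Rightarrow> int) \<Rightarrow> ((nat \<times> nat) \<times> (nat \<times> nat)) set \<Rightarrow> bool" where
  "efficient n a E \<longleftrightarrow>
     \<not> (\<exists>i j. 1 \<le> i \<and> i < n \<and> 1 \<le> j \<and> j \<le> n - i \<and>
        a (i-1) j = a (i-1) (j+1) \<and> a i j = a (i-1) j \<and>
        ((i,j),(i-1,j+1)) \<notin> E)"

end

theory Submission
  imports Defs
begin

text \<open>An edge from a_{ij} to its upper-right neighbour a_{i-1,j+1} exists iff the two are equal and
  a_{ij} is encircled: one direction is (2), the other is (6) if the two upper neighbours of a_{ij}
  differ, and efficiency if they are equal. An edge from a_{ij} to its upper-left neighbour
  a_{i-1,j} is forced by (5) if the two upper neighbours differ, and by (4) in row 1. Otherwise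
  efficiency supplies the upper-right edge of a_{ij}, so by (3) the upper-left edge exists iff
  a_{i-1,j} and a_{i-1,j+1} are both joined to a_{i-2,j+1}: an upper-right and an upper-left edge
  of row i-1, so induction on the row concludes.\<close>

lemma GZ_pattern_interlacing:
  assumes "GZ_pattern n lam a" "1 \<le> j" "i + j < n"
  shows "a i j \<le> a (i+1) j \<and> a (i+1) j \<le> a i (j+1)"
proof -
  have "1 \<le> i + 1 \<and> i + 1 < n \<and> 1 \<le> j \<and> j \<le> n - (i + 1)"
    using assms(2,3) by linarith
  then show ?thesis
    using assms(1) unfolding GZ_pattern_def by (metis add_diff_cancel_right')
qed

lemma enhanced_GZ_GZ_pattern: "enhanced_GZ n lam a C E \<Longrightarrow> GZ_pattern n lam a"
  unfolding enhanced_GZ_def by blast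

lemma enhanced_GZ_edge_eq_encircled:
  assumes "enhanced_GZ n lam a C E" "((i,j),(k,l)) \<in> E"
  shows "a i j = a k l \<and> (i,j) \<in> C"
  using assms unfolding enhanced_GZ_def by (elim conjE) blast

lemma enhanced_GZ_up_pair_iff_down_pair:
  assumes "enhanced_GZ n lam a C E" "1 \<le> i" "1 \<le> j" "j + 1 \<le> n - i"
  shows "((i,j),(i-1,j+1)) \<in> E \<and> ((i,j+1),(i-1,j+1)) \<in> E \<longleftrightarrow>
    ((i+1,j),(i,j)) \<in> E \<and> ((i+1,j),(i,j+1)) \<in> E"
  using assms unfolding enhanced_GZ_def by (elim conjE) blast

lemma enhanced_GZ_left_edge_row1:
  assumes "enhanced_GZ n lam a C E" "1 \<le> j" "j + 1 \<le> n" "a 0 j = a 0 (j+1)"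
  shows "((1,j),(0,j)) \<in> E"
  using assms unfolding enhanced_GZ_def by (elim conjE) blast

lemma enhanced_GZ_left_edge_of_less:
  assumes "enhanced_GZ n lam a C E" "1 \<le> i" "i < n" "1 \<le> j" "j \<le> n - i"
    "a (i-1) j < a (i-1) (j+1)" "a i j = a (i-1) j"
  shows "((i,j),(i-1,j)) \<in> E"
  using assms unfolding enhanced_GZ_def by (elim conjE) blast

lemma enhanced_GZ_right_edge_of_less:
  assumes "enhanced_GZ n lam a C E" "1 \<le> i" "i < n" "1 \<le> j" "j \<le> n - i"
    "a (i-1) j < a (i-1) (j+1)" "a i j = a (i-1) (j+1)" "(i,j) \<in> C"
  shows "((i,j),(i-1,j+1)) \<in> E"
  using assms unfolding enhanced_GZ_def by (elim conjE) blast

lemma efficient_right_edge: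
  assumes "efficient n a E" "1 \<le> i" "i < n" "1 \<le> j" "j \<le> n - i"
    "a (i-1) j = a (i-1) (j+1)" "a i j = a (i-1) j"
  shows "((i,j),(i-1,j+1)) \<in> E"
  using assms unfolding efficient_def by blast

text \<open>The lemmas above follow the indexing of the definitions; from here on the lower row is
  written i+1, so that the induction on rows is structural.\<close>

lemma efficient_right_edge_iff:
  assumes "enhanced_GZ n lam a C E" "efficient n a E" "1 \<le> j" "i + j < n"
  shows "((i+1,j),(i,j+1)) \<in> E \<longleftrightarrow> a (i+1) j = a i (j+1) \<and> (i+1,j) \<in> C"
proof
  assume eq: "a (i+1) j = a i (j+1) \<and> (i+1,j) \<in> C"
  have interlace: "a i j \<le> a (i+1) j \<and> a (i+1) j \<le> a i (j+1)"
    using GZ_pattern_interlacing[OF enhanced_GZ_GZ_pattern] assms(1,3,4) by blast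
  show "((i+1,j),(i,j+1)) \<in> E"
  proof (cases "a i j < a i (j+1)")
    case True
    with eq assms show ?thesis using enhanced_GZ_right_edge_of_less[of n lam a C E "i+1" j] by simp
  next
    case False
    with eq interlace assms show ?thesis using efficient_right_edge[of n a E "i+1" j] by simp
  qed
qed (use enhanced_GZ_edge_eq_encircled[OF assms(1)] in blast)

lemma enhanced_GZ_left_edge_iff_of_less:
  assumes "enhanced_GZ n lam a C E" "1 \<le> j" "i + j < n" "a i j < a i (j+1)"
  shows "((i+1,j),(i,j)) \<in> E \<longleftrightarrow> a (i+1) j = a i j"
  using assms enhanced_GZ_left_edge_of_less[of n lam a C E "i+1" j]
    enhanced_GZ_edge_eq_encircled[OF assms(1), of "i+1" j i j]
  by auto

lemma efficient_left_edge_iff_of_eq: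
  assumes "enhanced_GZ n lam a C E" "efficient n a E" "1 \<le> i" "1 \<le> j" "i + j < n"
    "a i j = a i (j+1)"
  shows "((i+1,j),(i,j)) \<in> E \<longleftrightarrow> ((i,j),(i-1,j+1)) \<in> E \<and> ((i,j+1),(i-1,j+1)) \<in> E"
proof -
  have "a (i+1) j = a i j"
    using GZ_pattern_interlacing[OF enhanced_GZ_GZ_pattern] assms(1,4-6) by fastforce
  then have "((i+1,j),(i,j+1)) \<in> E"
    using efficient_right_edge[of n a E "i+1" j] assms(2,4-6) by simp
  then show ?thesis
    using enhanced_GZ_up_pair_iff_down_pair[OF assms(1,3,4)] assms(5) by simp
qed

lemma efficient_left_edges_agree:
  assumes E1: "enhanced_GZ n lam a C E1" "efficient n a E1"
    and E2: "enhanced_GZ n lam a C E2" "efficient n a E2"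
  shows "1 \<le> j \<Longrightarrow> i + j < n \<Longrightarrow> ((i+1,j),(i,j)) \<in> E1 \<longleftrightarrow> ((i+1,j),(i,j)) \<in> E2"
proof (induction i arbitrary: j)
  case 0
  have "a 0 j \<le> a 0 (j+1)"
    using GZ_pattern_interlacing[OF enhanced_GZ_GZ_pattern[OF E1(1)], of j 0] 0 by linarith
  then consider "a 0 j < a 0 (j+1)" | "a 0 j = a 0 (j+1)" by linarith
  then show ?case
  proof cases
    case 1
    then show ?thesis
      using enhanced_GZ_left_edge_iff_of_less[OF E1(1)] enhanced_GZ_left_edge_iff_of_less[OF E2(1)] 0
      by simp
  next
    case 2
    then show ?thesis
      using enhanced_GZ_left_edge_row1[OF E1(1)] enhanced_GZ_left_edge_row1[OF E2(1)] 0 by simp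
  qed
next
  case (Suc i)
  have "a (Suc i) j \<le> a (Suc i) (j+1)"
    using GZ_pattern_interlacing[OF enhanced_GZ_GZ_pattern[OF E1(1)], of j "Suc i"] Suc.prems
    by linarith
  then consider "a (Suc i) j < a (Suc i) (j+1)" | "a (Suc i) j = a (Suc i) (j+1)" by linarith
  then show ?case
  proof cases
    case 1
    then show ?thesis
      using enhanced_GZ_left_edge_iff_of_less[OF E1(1)] enhanced_GZ_left_edge_iff_of_less[OF E2(1)]
        Suc.prems by simp
  next
    case 2
    then show ?thesis
      using efficient_left_edge_iff_of_eq[OF E1, of "Suc i" j] efficient_left_edge_iff_of_eq[OF E2, of "Suc i" j]
        efficient_right_edge_iff[OF E1, of j i] efficient_right_edge_iff[OF E2, of j i]
        Suc.IH[of "j+1"] Suc.prems by simp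
  qed
qed

lemma efficient_edges_subset:
  assumes E1: "enhanced_GZ n lam a C E1" "efficient n a E1"
    and E2: "enhanced_GZ n lam a C E2" "efficient n a E2"
  shows "E1 \<subseteq> E2"
proof
  fix e assume "e \<in> E1"
  then have "valid_edge n e"
    using E1(1) unfolding enhanced_GZ_def by (elim conjE) blast
  then obtain k j where k: "1 \<le> k" "k < n" and j: "1 \<le> j" "j \<le> n - k"
    and e: "e = ((k,j),(k-1,j)) \<or> e = ((k,j),(k-1,j+1))"
    unfolding valid_edge_def by blast
  obtain i where "k = i + 1"
    using k(1) by (metis le_add_diff_inverse2)
  with k j have i: "i + j < n" and "e = ((i+1,j),(i,j)) \<or> e = ((i+1,j),(i,j+1))"
    using e by auto
  then consider "e = ((i+1,j),(i,j))" | "e = ((i+1,j),(i,j+1))" by blast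
  then show "e \<in> E2"
  proof cases
    case 1
    with \<open>e \<in> E1\<close> show ?thesis
      using efficient_left_edges_agree[OF E1 E2 j(1) i] by simp
  next
    case 2
    with \<open>e \<in> E1\<close> show ?thesis
      using efficient_right_edge_iff[OF E1 j(1) i] efficient_right_edge_iff[OF E2 j(1) i] by simp
  qed
qed

theorem lemma4p2:
  fixes n :: nat and lam :: "nat \<Rightarrow> int" and a :: "nat \<Rightarrow> nat \<Rightarrow> int"
    and C :: "(nat \<times> nat) set"
    and E1 E2 :: "((nat \<times> nat) \<times> (nat \<times> nat)) set"
  assumes "is_partition n lam"
    and "enhanced_GZ n lam a C E1" and "efficient n a E1"
    and "enhanced_GZ n lam a C E2" and "efficient n a E2"
  shows "E1 = E2"
  using efficient_edges_subset[OF assms(2-5)] efficient_edges_subset[OF assms(4,5,2,3)] by blast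

end
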